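(* Let $n,d\in\mathbb{N}$ and $\alpha>0$. Let $M:(\{0,1\}^d)^n\to[0,1]^d$ be $(1,1/(10n))$-differentially private. Let $P^1,\dots,P^d$ be independent uniform draws from $[0,1]$ and let $X\in(\{0,1\}^d)^n$ have entries $X_i^j$ independent conditioned on $P$ with $\mathbb{E}[X_i^j\mid P]=P^j$. Assume $\mathbb{E}_{P,X,M}\big[\|M(X)-P\|_2^2\big]\le\alpha^2d$. If $\alpha\le1/18$, then $n\ge\sqrt d/5$.
   Context: A dataset $x\in(\{0,1\}^d)^n$ is an $n\times d$ matrix with rows $x_i$; two datasets are neighbors if they differ in at most one row. A randomized algorithm $M$ is $(\varepsilon,\delta)$-differentially private if for all neighboring $x,x'$ and all sets $R$ of outputs, $\Pr[M(x)\in R]\le e^\varepsilon\Pr[M(x')\in R]+\delta$. *)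

theory Defs
  imports "HOL-Probability.Probability"
begin

text \<open>Datasets in ({0,1}^d)^n: row i (i < n) is x i, entry j (j < d) is x i j.\<close>
definition datasets :: "nat \<Rightarrow> nat \<Rightarrow> (nat \<Rightarrow> nat \<Rightarrow> bool) set" where
  "datasets n d = ({..<n} \<rightarrow>\<^sub>E ({..<d} \<rightarrow>\<^sub>E (UNIV :: bool set)))"

definition neighbors :: "nat \<Rightarrow> (nat \<Rightarrow> nat \<Rightarrow> bool) \<Rightarrow> (nat \<Rightarrow> nat \<Rightarrow> bool) \<Rightarrow> bool" where
  "neighbors n x x' \<longleftrightarrow> card {i \<in> {..<n}. x i \<noteq> x' i} \<le> 1"

definition out_space :: "nat \<Rightarrow> (nat \<Rightarrow> real) measure" where
  "out_space d = PiM {..<d} (\<lambda>_. borel)"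

text \<open>A randomized algorithm from datasets to [0,1]^d: for each dataset a probability
  measure on R^d giving full mass to [0,1]^d.\<close>
definition mechanism :: "nat \<Rightarrow> nat \<Rightarrow> ((nat \<Rightarrow> nat \<Rightarrow> bool) \<Rightarrow> (nat \<Rightarrow> real) measure) \<Rightarrow> bool" where
  "mechanism n d M \<longleftrightarrow> (\<forall>x\<in>datasets n d. prob_space (M x) \<and> sets (M x) = sets (out_space d)
      \<and> emeasure (M x) ({..<d} \<rightarrow>\<^sub>E {0..1}) = 1)"

definition diff_private :: "nat \<Rightarrow> nat \<Rightarrow> real \<Rightarrow> real \<Rightarrow>
    ((nat \<Rightarrow> nat \<Rightarrow> bool) \<Rightarrow> (nat \<Rightarrow> real) measure) \<Rightarrow> bool" where
  "diff_private n d \<epsilon> \<delta> M \<longleftrightarrow>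
     (\<forall>x\<in>datasets n d. \<forall>x'\<in>datasets n d. neighbors n x x' \<longrightarrow>
        (\<forall>R\<in>sets (out_space d). measure (M x) R \<le> exp \<epsilon> * measure (M x') R + \<delta>))"

definition prior :: "nat \<Rightarrow> (nat \<Rightarrow> real) measure" where
  "prior d = PiM {..<d} (\<lambda>_. uniform_measure lborel {0..1})"

text \<open>Conditional probability of dataset x given P = p (entries independent Bernoulli(p j)).\<close>
definition data_prob :: "nat \<Rightarrow> nat \<Rightarrow> (nat \<Rightarrow> real) \<Rightarrow> (nat \<Rightarrow> nat \<Rightarrow> bool) \<Rightarrow> real" where
  "data_prob n d p x = (\<Prod>i<n. \<Prod>j<d. if x i j then p j else 1 - p j)"

definition expected_sq_error :: "nat \<Rightarrow> nat \<Rightarrow> ((nat \<Rightarrow> nat \<Rightarrow> bool) \<Rightarrow> (nat \<Rightarrow> real) measure) \<Rightarrow> ennreal" where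
  "expected_sq_error n d M =
     (\<integral>\<^sup>+ p. (\<Sum>x\<in>datasets n d. ennreal (data_prob n d p x) *
        (\<integral>\<^sup>+ y. ennreal (\<Sum>j<d. (y j - p j)\<^sup>2) \<partial>M x)) \<partial>prior d)"

end

theory Submission
  imports Defs
begin

text \<open>
  Clamp the output \<open>f(X)\<close> to \<open>[0, 1]\<^sup>d\<close> and consider the fingerprinting statistic
  \<open>Z = \<Sum>i j. (f(X) j - P j) (X i j - P j)\<close>.

  Privacy bounds \<open>E Z\<close> from above, one row at a time: exchanging row \<open>i\<close> with an independent
  fresh row \<open>R\<close> changes the law of the output by at most the factor \<open>e\<^sup>\<epsilon>\<close> plus \<open>\<delta>\<close>, and
  afterwards the output is independent of \<open>R\<close>, so its correlation with \<open>R\<close> has mean zero. The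
  loss is governed by \<open>E |\<Sum>j. (f j - P j) (R j - P j)|\<close>, which AM-GM and \<open>P (1 - P) \<le> 1/4\<close>
  bound by \<open>E \<parallel>f - P\<parallel>\<^sup>2 / (8 c) + c / 2\<close>.

  Accuracy bounds \<open>E Z\<close> from below: integrating by parts against the uniform prior
  (\<open>\<integral> p^a (1 - p)^(n-a) (a + 1 - (n + 2) p) dp = 0\<close>) turns \<open>E Z\<close> into
  \<open>\<Sum>j. E [f j (2 P j - 1)]\<close>, which is at least \<open>d/6 - E \<parallel>f - P\<parallel>\<^sup>2 / (2 \<alpha>) - \<alpha> d / 2\<close>.
  With \<open>E \<parallel>f - P\<parallel>\<^sup>2 \<le> \<alpha>\<^sup>2 d\<close> and \<open>c = \<alpha> \<surd>d / 2\<close> the two bounds force \<open>n \<ge> \<surd>d / 5\<close>.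
\<close>

section \<open>The uniform prior\<close>

abbreviation unif01 :: "real measure" where
  "unif01 \<equiv> uniform_measure lborel {0..1}"

definition unit_cube :: "nat \<Rightarrow> (nat \<Rightarrow> real) set" where
  "unit_cube d = {p. \<forall>j<d. 0 \<le> p j \<and> p j \<le> 1}"

lemma unit_cubeD:
  assumes "p \<in> unit_cube d" "j < d"
  shows "0 \<le> p j" "p j \<le> 1"
  using assms by (auto simp: unit_cube_def)

lemma unif01_eq_density: "unif01 = density lborel (\<lambda>x. ennreal (indicator {0..1} x))"
  unfolding uniform_measure_def
  by (simp add: ennreal_indicator) (rule arg_cong[of _ _ "density lborel"], simp add: fun_eq_iff divide_ennreal_def)

lemma prob_space_unif01: "prob_space unif01"
  by (rule prob_space_uniform_measure) auto

lemma
  fixes f :: "real \<Rightarrow> real"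
  assumes "continuous_on UNIV f"
  shows integrable_unif01: "integrable unif01 f"
    and integral_unif01: "integral\<^sup>L unif01 f = (\<integral>x. f x * indicator {0..1} x \<partial>lborel)"
proof -
  have "set_integrable lborel {0..1} f"
    by (rule borel_integrable_atLeastAtMost') (rule continuous_on_subset[OF assms], simp)
  moreover have f: "f \<in> borel_measurable lborel"
    using assms by (simp add: borel_measurable_continuous_onI)
  ultimately show "integrable unif01 f"
    unfolding unif01_eq_density
    by (subst integrable_density) (auto simp: set_integrable_def)
  show "integral\<^sup>L unif01 f = (\<integral>x. f x * indicator {0..1} x \<partial>lborel)"
    unfolding unif01_eq_density using f by (subst integral_density) (auto simp: mult.commute)
qed

lemma integral_unif01_FTC:
  fixes f F :: "real \<Rightarrow> real"
  assumes "continuous_on UNIV f" and "\<And>t. (F has_real_derivative f t) (at t)"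
  shows "integral\<^sup>L unif01 f = F 1 - F 0"
  unfolding integral_unif01[OF assms(1)]
  using assms(1) continuous_on_eq_continuous_at[of UNIV f]
  by (intro integral_FTC_Icc_real[OF _ assms(2)]) auto

text \<open>The integrand is the derivative of \<open>t^(a+1) (1 - t)^(b+1)\<close>, which vanishes at both ends.\<close>
lemma integral_unif01_beta_deriv:
  fixes a b :: nat
  shows "integral\<^sup>L unif01 (\<lambda>t. t^a * (1-t)^b * (real a + 1 - (real a + real b + 2) * t)) = 0"
proof -
  have deriv: "((\<lambda>t. t^Suc a * (1-t)^Suc b) has_real_derivative
      t^a * (1-t)^b * (real a + 1 - (real a + real b + 2) * t)) (at t)" for t :: real
  proof -
    have minus: "((\<lambda>t::real. 1 - t) has_real_derivative -1) (at t)"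
      by (auto intro!: derivative_eq_intros)
    have "((\<lambda>t. t^Suc a * (1-t)^Suc b) has_real_derivative
      ((1 + of_nat a) * (1 * t ^ a)) * (1-t)^Suc b + ((1 + of_nat b) * ((-1) * (1-t) ^ b)) * t^Suc a) (at t)"
      by (intro DERIV_mult DERIV_power_Suc derivative_intros minus)
    then show ?thesis
      by (simp add: algebra_simps)
  qed
  have "continuous_on UNIV (\<lambda>t::real. t^a * (1-t)^b * (real a + 1 - (real a + real b + 2) * t))"
    by (intro continuous_intros)
  from integral_unif01_FTC[OF this deriv] show ?thesis
    by simp
qed

lemma integral_unif01_mult_2t_minus_1: "integral\<^sup>L unif01 (\<lambda>t. t * (2*t - 1)) = 1/6"
proof -
  have deriv: "((\<lambda>t. 2/3*t^3 - t^2/2) has_real_derivative (t * (2*t - 1))) (at t)" for t :: real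
    by (auto intro!: derivative_eq_intros simp: algebra_simps power2_eq_square)
  have "continuous_on UNIV (\<lambda>t::real. t * (2*t - 1))"
    by (intro continuous_intros)
  from integral_unif01_FTC[OF this deriv] show ?thesis
    by simp
qed

lemma product_prob_space_unif01: "product_prob_space (\<lambda>_::nat. unif01)"
  by (intro product_prob_space.intro product_sigma_finite.intro product_prob_space_axioms.intro
      prob_space_imp_sigma_finite prob_space_unif01)

lemma prob_space_prior: "prob_space (prior d)"
  unfolding prior_def by (rule prob_space_PiM) (rule prob_space_unif01)

lemma AE_prior_unit_cube: "AE p in prior d. p \<in> unit_cube d"
proof -
  interpret product_prob_space "\<lambda>_::nat. unif01" "{..<d}"
    by (rule product_prob_space_unif01)
  have "AE t in unif01. 0 \<le> t \<and> t \<le> 1"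
    by (rule AE_uniform_measureI) auto
  then have "\<forall>j\<in>{..<d}. AE p in prior d. 0 \<le> p j \<and> p j \<le> 1"
    unfolding prior_def by (intro ballI AE_component)
  then have "AE p in prior d. \<forall>j\<in>{..<d}. 0 \<le> p j \<and> p j \<le> 1"
    by (subst eventually_ball_finite_distrib) auto
  then show ?thesis
    by (auto simp: unit_cube_def)
qed

lemma measurable_prior_component:
  assumes "j < d"
  shows "(\<lambda>p. p j) \<in> borel_measurable (prior d)"
proof -
  have "(\<lambda>p. p j) \<in> measurable (prior d) unif01"
    unfolding prior_def using assms by (intro measurable_component_singleton) simp
  moreover have "sets unif01 = sets borel"
    by simp
  ultimately show ?thesis
    using measurable_cong_sets by blast
qed

lemma integrable_prior_bounded:
  fixes f :: "(nat \<Rightarrow> real) \<Rightarrow> real"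
  assumes "f \<in> borel_measurable (prior d)" and "\<And>p. p \<in> unit_cube d \<Longrightarrow> \<bar>f p\<bar> \<le> K"
  shows "integrable (prior d) f"
proof -
  interpret prob_space "prior d"
    by (rule prob_space_prior)
  have "AE p in prior d. norm (f p) \<le> K"
    using AE_prior_unit_cube by (rule AE_mp) (use assms(2) in simp)
  then show ?thesis
    using assms(1) by (rule integrable_const_bound)
qed

lemma integral_prior_prod:
  fixes f :: "nat \<Rightarrow> real \<Rightarrow> real"
  assumes "\<And>k. k < d \<Longrightarrow> continuous_on UNIV (f k)"
  shows "(\<integral>p. (\<Prod>k<d. f k (p k)) \<partial>prior d) = (\<Prod>k<d. integral\<^sup>L unif01 (f k))"
proof -
  interpret product_prob_space "\<lambda>_::nat. unif01" "{..<d}"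
    by (rule product_prob_space_unif01)
  show ?thesis
    unfolding prior_def by (rule product_integral_prod) (auto intro: integrable_unif01 assms)
qed

lemma integral_prior_component:
  fixes f :: "real \<Rightarrow> real"
  assumes "j < d" and "continuous_on UNIV f"
  shows "(\<integral>p. f (p j) \<partial>prior d) = integral\<^sup>L unif01 f"
proof -
  define g where "g k t = (if k = j then f t else 1)" for k t
  have "(\<integral>p. f (p j) \<partial>prior d) = (\<integral>p. (\<Prod>k<d. g k (p k)) \<partial>prior d)"
    using assms(1) by (simp add: g_def)
  also have "\<dots> = (\<Prod>k<d. integral\<^sup>L unif01 (g k))"
  proof (rule integral_prior_prod)
    show "continuous_on UNIV (g k)" for k
      using assms(2) by (cases "k = j") (simp_all add: g_def[abs_def])
  qed
  also have "\<dots> = (\<Prod>k<d. if k = j then integral\<^sup>L unif01 f else 1)"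
    using prob_space.prob_space[OF prob_space_unif01] by (intro prod.cong) (simp_all add: g_def[abs_def])
  also have "\<dots> = integral\<^sup>L unif01 f"
    using assms(1) by simp
  finally show ?thesis .
qed

lemma integral_prior_drift: "j < d \<Longrightarrow> (\<integral>p. p j * (2 * p j - 1) \<partial>prior d) = 1/6"
  using integral_prior_component[of j d "\<lambda>t. t * (2 * t - 1)"]
  by (simp add: integral_unif01_mult_2t_minus_1 continuous_intros)

section \<open>The distribution of a dataset given the prior\<close>

definition bit_rows :: "nat \<Rightarrow> (nat \<Rightarrow> bool) set" where
  "bit_rows d = {..<d} \<rightarrow>\<^sub>E (UNIV :: bool set)"

definition row_prob :: "nat \<Rightarrow> (nat \<Rightarrow> real) \<Rightarrow> (nat \<Rightarrow> bool) \<Rightarrow> real" where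
  "row_prob d p r = (\<Prod>k<d. if r k then p k else 1 - p k)"

lemma finite_bit_rows: "finite (bit_rows d)"
  unfolding bit_rows_def by (auto intro!: finite_PiE)

lemma datasets_eq_PiE_bit_rows: "datasets n d = {..<n} \<rightarrow>\<^sub>E bit_rows d"
  unfolding datasets_def bit_rows_def ..

lemma data_prob_eq_prod_row_prob: "data_prob n d p x = (\<Prod>i<n. row_prob d p (x i))"
  unfolding data_prob_def row_prob_def ..

lemma row_prob_nonneg: "p \<in> unit_cube d \<Longrightarrow> 0 \<le> row_prob d p r"
  unfolding row_prob_def unit_cube_def by (intro prod_nonneg) auto

lemma row_prob_le_1: "p \<in> unit_cube d \<Longrightarrow> row_prob d p r \<le> 1"
  unfolding row_prob_def unit_cube_def by (intro prod_le_1) auto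

lemma data_prob_nonneg: "p \<in> unit_cube d \<Longrightarrow> 0 \<le> data_prob n d p x"
  unfolding data_prob_eq_prod_row_prob by (intro prod_nonneg row_prob_nonneg)

lemma data_prob_le_1: "p \<in> unit_cube d \<Longrightarrow> data_prob n d p x \<le> 1"
  unfolding data_prob_eq_prod_row_prob by (intro prod_le_1 conjI row_prob_nonneg row_prob_le_1)

lemma integrable_prior_data_prob_mult:
  assumes f: "f \<in> borel_measurable (prior d)" and bounded: "\<And>p. p \<in> unit_cube d \<Longrightarrow> \<bar>f p\<bar> \<le> K"
  shows "integrable (prior d) (\<lambda>p. data_prob n d p x * f p)"
proof (rule integrable_prior_bounded)
  show "(\<lambda>p. data_prob n d p x * f p) \<in> borel_measurable (prior d)"
    unfolding data_prob_def using measurable_prior_component f by measurable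
  show "\<bar>data_prob n d p x * f p\<bar> \<le> K" if "p \<in> unit_cube d" for p
    using bounded[OF that] data_prob_nonneg[OF that] data_prob_le_1[OF that]
    by (simp add: abs_mult) (meson abs_ge_zero mult_left_le_one_le order.trans)
qed

lemma sum_bit_rows_prod:
  fixes \<phi> :: "nat \<Rightarrow> bool \<Rightarrow> real"
  shows "(\<Sum>r\<in>bit_rows d. \<Prod>k<d. \<phi> k (r k)) = (\<Prod>k<d. \<phi> k True + \<phi> k False)"
proof -
  have "(\<Prod>k<d. \<Sum>v\<in>UNIV. \<phi> k v) = (\<Sum>r\<in>bit_rows d. \<Prod>k<d. \<phi> k (r k))"
    unfolding bit_rows_def by (rule prod_sum_PiE) auto
  then show ?thesis
    by (simp add: UNIV_bool add.commute)
qed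

lemma sum_row_prob_mult_prod:
  fixes g :: "nat \<Rightarrow> bool \<Rightarrow> real"
  shows "(\<Sum>r\<in>bit_rows d. row_prob d p r * (\<Prod>k<d. g k (r k)))
       = (\<Prod>k<d. p k * g k True + (1 - p k) * g k False)"
  using sum_bit_rows_prod[where \<phi>="\<lambda>k v. (if v then p k else 1 - p k) * g k v"]
  by (simp add: row_prob_def prod.distrib)

lemma sum_row_prob_component:
  assumes "j < d"
  shows "(\<Sum>r\<in>bit_rows d. row_prob d p r * g (r j)) = p j * g True + (1 - p j) * g False"
proof -
  have "(\<Sum>r\<in>bit_rows d. row_prob d p r * g (r j))
      = (\<Sum>r\<in>bit_rows d. row_prob d p r * (\<Prod>k<d. if k = j then g (r k) else 1))"
    using assms by simp
  also have "\<dots> = (\<Prod>k<d. if k = j then p j * g True + (1 - p j) * g False else 1)"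
    by (subst sum_row_prob_mult_prod[where g="\<lambda>k v. if k = j then g v else 1"]) (intro prod.cong, auto)
  finally show ?thesis
    using assms by simp
qed

lemma sum_row_prob_two_components:
  assumes "j < d" "l < d" "j \<noteq> l"
  shows "(\<Sum>r\<in>bit_rows d. row_prob d p r * (g (r j) * h (r l)))
       = (p j * g True + (1 - p j) * g False) * (p l * h True + (1 - p l) * h False)"
proof -
  define f where "f k v = (if k = j then g v else 1) * (if k = l then h v else 1)" for k v
  have "g (r j) * h (r l) = (\<Prod>k<d. f k (r k))" for r
    using assms by (simp add: f_def prod.distrib)
  then have "(\<Sum>r\<in>bit_rows d. row_prob d p r * (g (r j) * h (r l)))
      = (\<Prod>k<d. p k * f k True + (1 - p k) * f k False)"
    by (simp add: sum_row_prob_mult_prod)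
  also have "\<dots> = (\<Prod>k<d. (if k = j then p j * g True + (1 - p j) * g False else 1) *
       (if k = l then p l * h True + (1 - p l) * h False else 1))"
    using assms by (intro prod.cong) (auto simp: f_def)
  finally show ?thesis
    using assms by (simp add: prod.distrib)
qed

lemma sum_row_prob: "(\<Sum>r\<in>bit_rows d. row_prob d p r) = 1"
  using sum_row_prob_mult_prod[of d p "\<lambda>_ _. 1"] by simp

lemma sum_row_prob_centered:
  "j < d \<Longrightarrow> (\<Sum>r\<in>bit_rows d. row_prob d p r * (of_bool (r j) - p j)) = 0"
  using sum_row_prob_component[of j d p "\<lambda>v. of_bool v - p j"] by (simp add: algebra_simps)

lemma sum_row_prob_abs_centered:
  assumes "j < d" "p \<in> unit_cube d"
  shows "(\<Sum>r\<in>bit_rows d. row_prob d p r * \<bar>of_bool (r j) - p j\<bar>) = 2 * p j * (1 - p j)"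
  using sum_row_prob_component[OF assms(1), of p "\<lambda>v. \<bar>of_bool v - p j\<bar>"] unit_cubeD[OF assms(2,1)]
  by (simp add: algebra_simps)

lemma sum_row_prob_linear_form_sq:
  fixes u :: "nat \<Rightarrow> real"
  shows "(\<Sum>r\<in>bit_rows d. row_prob d p r * (\<Sum>j<d. u j * (of_bool (r j) - p j))\<^sup>2)
       = (\<Sum>j<d. (u j)\<^sup>2 * (p j * (1 - p j)))"
proof -
  have "(\<Sum>r\<in>bit_rows d. row_prob d p r * (\<Sum>j<d. u j * (of_bool (r j) - p j))\<^sup>2)
      = (\<Sum>j<d. \<Sum>l<d. u j * u l *
          (\<Sum>r\<in>bit_rows d. row_prob d p r * ((of_bool (r j) - p j) * (of_bool (r l) - p l))))"
    by (simp add: power2_eq_square sum_product sum_distrib_left sum.swap[of _ "bit_rows d"] algebra_simps)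
  also have "\<dots> = (\<Sum>j<d. \<Sum>l<d. if l = j then (u j)\<^sup>2 * (p j * (1 - p j)) else 0)"
  proof (intro sum.cong refl)
    fix j l assume jl: "j \<in> {..<d}" "l \<in> {..<d}"
    have diag: "(\<Sum>r\<in>bit_rows d. row_prob d p r * ((of_bool (r j) - p j) * (of_bool (r j) - p j)))
        = p j * (1 - p j)"
      using jl by (intro trans[OF sum_row_prob_component[of j d p "\<lambda>v. (of_bool v - p j) * (of_bool v - p j)"]])
        (simp_all add: algebra_simps)
    show "u j * u l * (\<Sum>r\<in>bit_rows d. row_prob d p r * ((of_bool (r j) - p j) * (of_bool (r l) - p l)))
             = (if l = j then (u j)\<^sup>2 * (p j * (1 - p j)) else 0)"
    proof (cases "l = j")
      case True
      then show ?thesis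
        unfolding True diag by (simp add: power2_eq_square)
    next
      case False
      then show ?thesis
        using sum_row_prob_two_components[of j d l p "\<lambda>v. of_bool v - p j" "\<lambda>v. of_bool v - p l"] jl
        by (simp add: algebra_simps)
    qed
  qed
  finally show ?thesis
    by simp
qed

lemma sum_data_prob_row:
  assumes "i < n"
  shows "(\<Sum>x\<in>datasets n d. data_prob n d p x * g (x i)) = (\<Sum>r\<in>bit_rows d. row_prob d p r * g r)"
proof -
  have "(\<Prod>i'<n. \<Sum>r\<in>bit_rows d. row_prob d p r * (if i' = i then g r else 1))
      = (\<Sum>x\<in>datasets n d. \<Prod>i'<n. row_prob d p (x i') * (if i' = i then g (x i') else 1))"
    unfolding datasets_eq_PiE_bit_rows by (rule prod_sum_PiE) (auto simp: finite_bit_rows)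
  moreover have "(\<Prod>i'<n. \<Sum>r\<in>bit_rows d. row_prob d p r * (if i' = i then g r else 1))
      = (\<Prod>i'<n. if i' = i then \<Sum>r\<in>bit_rows d. row_prob d p r * g r else 1)"
    by (intro prod.cong refl) (auto simp: sum_row_prob)
  moreover have "(\<Prod>i'<n. row_prob d p (x i') * (if i' = i then g (x i') else 1))
      = data_prob n d p x * g (x i)" for x
    using assms by (simp add: data_prob_eq_prod_row_prob prod.distrib)
  ultimately show ?thesis
    using assms by simp
qed

lemma sum_data_prob: "(\<Sum>x\<in>datasets n d. data_prob n d p x) = 1"
proof (cases "n = 0")
  case True
  then show ?thesis
    by (simp add: datasets_def data_prob_def)
next
  case False
  then show ?thesis
    using sum_data_prob_row[of 0 n d p "\<lambda>_. 1"] by (simp add: sum_row_prob)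
qed

lemma fun_upd_in_datasets:
  "x \<in> datasets n d \<Longrightarrow> i < n \<Longrightarrow> r \<in> bit_rows d \<Longrightarrow> x(i := r) \<in> datasets n d"
  unfolding datasets_eq_PiE_bit_rows by (auto simp: PiE_iff extensional_def)

lemma data_prob_fun_upd:
  assumes "x \<in> datasets n d" "i < n"
  shows "data_prob n d p (x(i := r)) * row_prob d p (x i) = data_prob n d p x * row_prob d p r"
  using assms unfolding data_prob_eq_prod_row_prob
  by (simp add: prod.remove[of "{..<n}" i] mult_ac)

lemma neighbors_fun_upd:
  assumes "i < n"
  shows "neighbors n x (x(i := r))" "neighbors n (x(i := r)) x"
proof -
  have "{i' \<in> {..<n}. x i' \<noteq> (x(i := r)) i'} \<subseteq> {i}" "{i' \<in> {..<n}. (x(i := r)) i' \<noteq> x i'} \<subseteq> {i}"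
    by auto
  then show "neighbors n x (x(i := r))" "neighbors n (x(i := r)) x"
    unfolding neighbors_def by (auto dest!: card_mono[rotated] simp del: fun_upd_apply)
qed

text \<open>Replacing row \<open>i\<close> of \<open>X\<close> by an independent fresh row \<open>R\<close> swaps the joint laws of
  \<open>(X, R)\<close> and \<open>(X[i := R], X i)\<close>.\<close>
lemma sum_data_prob_resample_row:
  assumes "i < n"
  shows "(\<Sum>x\<in>datasets n d. \<Sum>r\<in>bit_rows d. data_prob n d p x * row_prob d p r * F (x i) (x(i := r)))
       = (\<Sum>x\<in>datasets n d. \<Sum>r\<in>bit_rows d. data_prob n d p x * row_prob d p r * F r x)"
proof -
  let ?D = "datasets n d \<times> bit_rows d"
  define \<phi> where "\<phi> = (\<lambda>(x::nat\<Rightarrow>nat\<Rightarrow>bool, r::nat\<Rightarrow>bool). (x(i := r), x i))"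
  have row: "x i \<in> bit_rows d" if "x \<in> datasets n d" for x
    using that assms unfolding datasets_eq_PiE_bit_rows by auto
  have "(\<Sum>(x,r)\<in>?D. data_prob n d p x * row_prob d p r * F (x i) (x(i := r)))
      = (\<Sum>(x,r)\<in>?D. data_prob n d p x * row_prob d p r * F r x)"
  proof (rule sum.reindex_bij_witness[of _ \<phi> \<phi>])
    fix a assume "a \<in> ?D"
    then show "\<phi> (\<phi> a) = a" "\<phi> a \<in> ?D"
      using assms row by (auto simp: \<phi>_def fun_upd_in_datasets split: prod.splits)
  next
    fix a assume "a \<in> ?D"
    then show "\<phi> (\<phi> a) = a" "\<phi> a \<in> ?D"
      using assms row by (auto simp: \<phi>_def fun_upd_in_datasets split: prod.splits)
  next
    fix a assume "a \<in> ?D"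
    then show "(case \<phi> a of (x, r) \<Rightarrow> data_prob n d p x * row_prob d p r * F r x)
             = (case a of (x, r) \<Rightarrow> data_prob n d p x * row_prob d p r * F (x i) (x(i := r)))"
      using data_prob_fun_upd[OF _ assms] by (auto simp: \<phi>_def)
  qed
  then show ?thesis
    by (simp add: sum.cartesian_product)
qed

section \<open>The fingerprinting identity\<close>

definition col_count :: "nat \<Rightarrow> (nat \<Rightarrow> nat \<Rightarrow> bool) \<Rightarrow> nat \<Rightarrow> nat" where
  "col_count n x j = card {i\<in>{..<n}. x i j}"

lemma col_count_le: "col_count n x j \<le> n"
  unfolding col_count_def by (rule order.trans[OF card_mono[of "{..<n}"]]) auto

lemma of_nat_col_count: "real (col_count n x j) = (\<Sum>i<n. of_bool (x i j))"
  unfolding col_count_def by (simp add: of_bool_def sum.If_cases Int_def)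

lemma prod_if_eq_power:
  fixes t s :: real
  shows "(\<Prod>i<n. if P i then t else s) = t ^ card {i\<in>{..<n}. P i} * s ^ (n - card {i\<in>{..<n}. P i})"
proof -
  have "{..<n} \<inter> - {i. P i} = {..<n} - {i\<in>{..<n}. P i}"
    by auto
  then have "card ({..<n} \<inter> - {i. P i}) = n - card {i\<in>{..<n}. P i}"
    by (simp only:) (subst card_Diff_subset, auto)
  moreover have "{..<n} \<inter> {i. P i} = {i\<in>{..<n}. P i}"
    by auto
  ultimately show ?thesis
    by (simp add: prod.If_cases)
qed

lemma data_prob_eq_col_count:
  "data_prob n d p x = (\<Prod>k<d. p k ^ col_count n x k * (1 - p k) ^ (n - col_count n x k))"
  unfolding data_prob_def col_count_def by (subst prod.swap) (simp add: prod_if_eq_power)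

text \<open>Integration by parts against the uniform prior: with \<open>a\<close> ones in column \<open>j\<close>,
  the \<open>j\<close>-th factor of the likelihood integrates against \<open>a + 1 - (n + 2) p j\<close> to zero.\<close>
lemma fingerprint_identity:
  assumes "j < d"
  shows "(\<integral>p. data_prob n d p x * (real (col_count n x j) + 1 - (real n + 2) * p j) \<partial>prior d) = 0"
proof -
  let ?a = "col_count n x"
  define f where "f k t = t ^ ?a k * (1 - t) ^ (n - ?a k) *
      (if k = j then real (?a j) + 1 - (real n + 2) * t else 1)" for k t
  have "f j = (\<lambda>t. t ^ ?a j * (1 - t) ^ (n - ?a j) *
      (real (?a j) + 1 - (real (?a j) + real (n - ?a j) + 2) * t))"
    using col_count_le[of n x j] by (simp add: f_def fun_eq_iff)
  then have "integral\<^sup>L unif01 (f j) = 0"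
    by (simp only: integral_unif01_beta_deriv)
  then have zero: "(\<Prod>k<d. integral\<^sup>L unif01 (f k)) = 0"
    using assms by (intro prod_zero) auto
  have "data_prob n d p x * (real (?a j) + 1 - (real n + 2) * p j) = (\<Prod>k<d. f k (p k))" for p
    using assms by (simp add: f_def data_prob_eq_col_count prod.distrib)
  then have "(\<integral>p. data_prob n d p x * (real (?a j) + 1 - (real n + 2) * p j) \<partial>prior d)
      = (\<integral>p. (\<Prod>k<d. f k (p k)) \<partial>prior d)"
    by simp
  also have "\<dots> = (\<Prod>k<d. integral\<^sup>L unif01 (f k))"
  proof (rule integral_prior_prod)
    show "continuous_on UNIV (f k)" for k
      by (cases "k = j") (simp_all add: f_def[abs_def] continuous_intros)
  qed
  finally show ?thesis
    using zero by simp
qed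

section \<open>Differential privacy and expectations\<close>

lemma nn_integral_eq_layer_cake:
  fixes g :: "'a \<Rightarrow> real"
  assumes "prob_space \<mu>" and g: "g \<in> borel_measurable \<mu>" and nonneg: "\<And>y. 0 \<le> g y"
    and bounded: "\<And>y. g y \<le> B"
  shows "(\<integral>\<^sup>+ y. ennreal (g y) \<partial>\<mu>)
       = (\<integral>\<^sup>+ t. indicator {0..B} t * emeasure \<mu> {y \<in> space \<mu>. t < g y} \<partial>lborel)"
proof -
  interpret prob_space \<mu> by fact
  interpret P: pair_sigma_finite \<mu> lborel ..
  define F where "F y t = (if 0 \<le> t \<and> t \<le> B \<and> t < g y then 1 else 0 :: ennreal)" for y t
  have "(\<integral>\<^sup>+ t. F y t \<partial>lborel) = ennreal (g y)" for y
  proof -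
    have "(\<integral>\<^sup>+ t. F y t \<partial>lborel) = (\<integral>\<^sup>+ t. indicator {0..<g y} t \<partial>lborel)"
      using bounded[of y] by (intro nn_integral_cong) (auto simp: F_def indicator_def)
    then show ?thesis
      using nonneg[of y] by simp
  qed
  moreover have "(\<integral>\<^sup>+ y. F y t \<partial>\<mu>) = indicator {0..B} t * emeasure \<mu> {y \<in> space \<mu>. t < g y}" for t
  proof -
    have "(\<integral>\<^sup>+ y. F y t \<partial>\<mu>) = (\<integral>\<^sup>+ y. indicator {0..B} t * indicator {y \<in> space \<mu>. t < g y} y \<partial>\<mu>)"
      by (intro nn_integral_cong) (auto simp: F_def indicator_def)
    then show ?thesis
      using g by (simp add: nn_integral_cmult_indicator)
  qed
  moreover have "case_prod F \<in> borel_measurable (\<mu> \<Otimes>\<^sub>M lborel)"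
    unfolding F_def using g by measurable
  ultimately show ?thesis
    using P.Fubini'[of F] by simp
qed

lemma measurable_emeasure_superlevel:
  fixes g :: "'a \<Rightarrow> real"
  assumes "prob_space \<nu>" and g: "g \<in> borel_measurable \<nu>"
  shows "(\<lambda>t. emeasure \<nu> {y \<in> space \<nu>. t < g y}) \<in> borel_measurable borel"
proof -
  interpret prob_space \<nu> by fact
  have "{x \<in> space (lborel \<Otimes>\<^sub>M \<nu>). fst x < g (snd x)} \<in> sets (lborel \<Otimes>\<^sub>M \<nu>)"
    using g by measurable
  from measurable_emeasure_Pair[OF this]
  have "(\<lambda>t. emeasure \<nu> (Pair t -` {x \<in> space (lborel \<Otimes>\<^sub>M \<nu>). fst x < g (snd x)})) \<in> borel_measurable lborel" .
  moreover have "Pair t -` {x \<in> space (lborel \<Otimes>\<^sub>M \<nu>). fst x < g (snd x)} = {y \<in> space \<nu>. t < g y}" for t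
    by (auto simp: space_pair_measure)
  ultimately show ?thesis
    by simp
qed

lemma integral_le_if_measure_le:
  fixes g :: "'a \<Rightarrow> real"
  assumes pm: "prob_space \<mu>" and pn: "prob_space \<nu>" and sm: "sets \<mu> = sets S" and sn: "sets \<nu> = sets S"
    and le: "\<And>R. R \<in> sets S \<Longrightarrow> measure \<mu> R \<le> c * measure \<nu> R + \<delta>"
    and c: "0 \<le> c" and \<delta>: "0 \<le> \<delta>"
    and g: "g \<in> borel_measurable S" and nonneg: "\<And>y. 0 \<le> g y" and bounded: "\<And>y. g y \<le> B"
  shows "integral\<^sup>L \<mu> g \<le> c * integral\<^sup>L \<nu> g + \<delta> * B"
proof -
  interpret m: prob_space \<mu> by fact
  interpret n: prob_space \<nu> by fact
  have gm: "g \<in> borel_measurable \<mu>" and gn: "g \<in> borel_measurable \<nu>"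
    using g by (simp_all add: measurable_cong_sets[OF sm refl] measurable_cong_sets[OF sn refl])
  have B: "0 \<le> B"
    using nonneg[of undefined] bounded[of undefined] by simp
  have int_m: "integrable \<mu> g" and int_n: "integrable \<nu> g"
    using gm gn nonneg bounded by (auto intro!: m.integrable_const_bound[where B=B] n.integrable_const_bound[where B=B])
  have space: "space \<mu> = space \<nu>"
    using sm sn sets_eq_imp_space_eq by metis
  have superlevel: "emeasure \<mu> {y \<in> space \<mu>. t < g y}
      \<le> ennreal c * emeasure \<nu> {y \<in> space \<nu>. t < g y} + ennreal \<delta>" for t
  proof -
    have "{y \<in> space \<nu>. t < g y} \<in> sets \<nu>"
      using gn by measurable
    then have "{y \<in> space \<nu>. t < g y} \<in> sets S"
      using sn by simp
    from ennreal_leI[OF le[OF this]]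
    show ?thesis
      using c \<delta> by (simp add: m.emeasure_eq_measure n.emeasure_eq_measure space ennreal_plus ennreal_mult)
  qed
  have "ennreal (integral\<^sup>L \<mu> g)
      = (\<integral>\<^sup>+ t. indicator {0..B} t * emeasure \<mu> {y \<in> space \<mu>. t < g y} \<partial>lborel)"
    using int_m nonneg nn_integral_eq_layer_cake[OF pm gm nonneg bounded] by (simp add: nn_integral_eq_integral)
  also have "\<dots> \<le> (\<integral>\<^sup>+ t. ennreal c * (indicator {0..B} t * emeasure \<nu> {y \<in> space \<nu>. t < g y})
      + ennreal \<delta> * indicator {0..B} t \<partial>lborel)"
    using superlevel by (intro nn_integral_mono) (simp add: indicator_def)
  also have "\<dots> = ennreal c * (\<integral>\<^sup>+ t. indicator {0..B} t * emeasure \<nu> {y \<in> space \<nu>. t < g y} \<partial>lborel)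
      + ennreal \<delta> * (\<integral>\<^sup>+ t. indicator {0..B} t \<partial>lborel)"
    using measurable_emeasure_superlevel[OF pn gn] by (subst nn_integral_add) (auto simp: nn_integral_cmult)
  also have "\<dots> = ennreal (c * integral\<^sup>L \<nu> g + \<delta> * B)"
    using nn_integral_eq_layer_cake[OF pn gn nonneg bounded] int_n nonneg B c \<delta>
    by (simp add: nn_integral_eq_integral ennreal_plus ennreal_mult integral_nonneg_AE)
  finally show ?thesis
    using c \<delta> B nonneg
    by (subst (asm) ennreal_le_iff) (auto intro!: add_nonneg_nonneg mult_nonneg_nonneg integral_nonneg_AE)
qed

text \<open>Apply the one-sided bound to the positive part in one direction and to the negative part
  in the other; \<open>exp \<epsilon> + exp (-\<epsilon>) \<ge> 2\<close> collects the multiplicative losses into \<open>\<integral>|h|\<close>.\<close>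
lemma integral_le_if_two_sided_measure_le:
  fixes h :: "'a \<Rightarrow> real"
  assumes pm: "prob_space \<mu>" and pn: "prob_space \<nu>" and sm: "sets \<mu> = sets S" and sn: "sets \<nu> = sets S"
    and le1: "\<And>R. R \<in> sets S \<Longrightarrow> measure \<mu> R \<le> exp \<epsilon> * measure \<nu> R + \<delta>"
    and le2: "\<And>R. R \<in> sets S \<Longrightarrow> measure \<nu> R \<le> exp \<epsilon> * measure \<mu> R + \<delta>"
    and \<epsilon>: "0 \<le> \<epsilon>" and \<delta>: "0 \<le> \<delta>"
    and h: "h \<in> borel_measurable S" and bounded: "\<And>y. \<bar>h y\<bar> \<le> B"
  shows "integral\<^sup>L \<mu> h \<le> integral\<^sup>L \<nu> h + (exp \<epsilon> - 1) * integral\<^sup>L \<nu> (\<lambda>y. \<bar>h y\<bar>) + 2 * \<delta> * B"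
proof -
  interpret m: prob_space \<mu> by fact
  interpret n: prob_space \<nu> by fact
  define hp where "hp y = max 0 (h y)" for y
  define hn where "hn y = max 0 (- h y)" for y
  have meas: "hp \<in> borel_measurable S" "hn \<in> borel_measurable S"
    unfolding hp_def hn_def using h by auto
  have B: "0 \<le> B"
    by (rule order_trans[OF abs_ge_zero bounded])
  have bounds: "\<And>y. 0 \<le> hp y" "\<And>y. hp y \<le> B" "\<And>y. 0 \<le> hn y" "\<And>y. hn y \<le> B"
    using bounded B unfolding hp_def hn_def by (auto simp: abs_le_iff)
  have int: "integrable \<mu> hp" "integrable \<mu> hn" "integrable \<nu> hp" "integrable \<nu> hn"
    using meas bounds
    by (auto simp: measurable_cong_sets[OF sm refl] measurable_cong_sets[OF sn refl]
        intro!: m.integrable_const_bound[where B=B] n.integrable_const_bound[where B=B])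
  have "h = (\<lambda>y. hp y - hn y)" "(\<lambda>y. \<bar>h y\<bar>) = (\<lambda>y. hp y + hn y)"
    unfolding hp_def hn_def by (auto simp: fun_eq_iff)
  then have split:
      "integral\<^sup>L \<mu> h = integral\<^sup>L \<mu> hp - integral\<^sup>L \<mu> hn"
      "integral\<^sup>L \<nu> h = integral\<^sup>L \<nu> hp - integral\<^sup>L \<nu> hn"
      "integral\<^sup>L \<nu> (\<lambda>y. \<bar>h y\<bar>) = integral\<^sup>L \<nu> hp + integral\<^sup>L \<nu> hn"
    using int by (metis Bochner_Integration.integral_diff Bochner_Integration.integral_add)+
  have pos: "integral\<^sup>L \<mu> hp \<le> exp \<epsilon> * integral\<^sup>L \<nu> hp + \<delta> * B"
    by (rule integral_le_if_measure_le[OF pm pn sm sn le1 _ \<delta> meas(1) bounds(1,2)]) simp_all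
  have "integral\<^sup>L \<nu> hn \<le> exp \<epsilon> * integral\<^sup>L \<mu> hn + \<delta> * B"
    by (rule integral_le_if_measure_le[OF pn pm sn sm le2 _ \<delta> meas(2) bounds(3,4)]) simp_all
  then have neg: "exp (-\<epsilon>) * (integral\<^sup>L \<nu> hn - \<delta> * B) \<le> integral\<^sup>L \<mu> hn"
    by (simp add: exp_minus field_simps)
  have "exp \<epsilon> + exp (-\<epsilon>) \<ge> 2"
    using exp_ge_add_one_self[of \<epsilon>] exp_ge_add_one_self[of "-\<epsilon>"] by linarith
  moreover have "0 \<le> integral\<^sup>L \<nu> hn"
    using bounds by (auto intro: integral_nonneg_AE)
  ultimately have "(2 - exp \<epsilon>) * integral\<^sup>L \<nu> hn \<le> exp (-\<epsilon>) * integral\<^sup>L \<nu> hn"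
    by (intro mult_right_mono) auto
  moreover have "exp (-\<epsilon>) * (\<delta> * B) \<le> \<delta> * B"
    using \<epsilon> \<delta> B by (intro mult_left_le_one_le) auto
  ultimately show ?thesis
    unfolding split using pos neg by (simp add: algebra_simps)
qed

section \<open>The clamped mechanism\<close>

definition clamp01 :: "real \<Rightarrow> real" where
  "clamp01 t = max 0 (min 1 t)"

lemma clamp01_bounds: "0 \<le> clamp01 t" "clamp01 t \<le> 1"
  unfolding clamp01_def by auto

lemma abs_clamp01_diff_le: "0 \<le> s \<Longrightarrow> s \<le> 1 \<Longrightarrow> \<bar>clamp01 t - s\<bar> \<le> \<bar>t - s\<bar>"
  unfolding clamp01_def by auto

lemma abs_clamp01_diff_le_1: "0 \<le> s \<Longrightarrow> s \<le> 1 \<Longrightarrow> \<bar>clamp01 t - s\<bar> \<le> 1"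
  using clamp01_bounds[of t] by auto

lemma borel_measurable_clamp01[measurable]: "clamp01 \<in> borel_measurable borel"
  unfolding clamp01_def by measurable

lemma measurable_out_space_component: "j < d \<Longrightarrow> (\<lambda>y. y j) \<in> borel_measurable (out_space d)"
  unfolding out_space_def by (rule measurable_component_singleton) simp

lemma abs_le_sq_div_add:
  fixes h c :: real
  assumes "0 < c"
  shows "\<bar>h\<bar> \<le> h\<^sup>2 / (2 * c) + c / 2"
proof -
  have "0 \<le> (\<bar>h\<bar> - c)\<^sup>2"
    by simp
  then show ?thesis
    using assms by (simp add: field_simps power2_eq_square)
qed

lemma mult_one_minus_le_quarter: "(t::real) * (1 - t) \<le> 1/4"
  using zero_le_power2[of "2 * t - 1"] by (simp add: power2_eq_square algebra_simps)

text \<open>Outputs are clamped to \<open>[0, 1]\<close>: this only moves them closer to any \<open>p \<in> [0, 1]\<^sup>d\<close>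
  and makes every integral below bounded.\<close>
locale mechanism_setting =
  fixes n d :: nat and M :: "(nat \<Rightarrow> nat \<Rightarrow> bool) \<Rightarrow> (nat \<Rightarrow> real) measure"
  assumes mechanism: "mechanism n d M"
begin

definition out_mean :: "(nat \<Rightarrow> nat \<Rightarrow> bool) \<Rightarrow> nat \<Rightarrow> real" where
  "out_mean x j = (\<integral>y. clamp01 (y j) \<partial>M x)"

definition out_moment2 :: "(nat \<Rightarrow> nat \<Rightarrow> bool) \<Rightarrow> nat \<Rightarrow> real" where
  "out_moment2 x j = (\<integral>y. (clamp01 (y j))\<^sup>2 \<partial>M x)"

definition out_error :: "(nat \<Rightarrow> nat \<Rightarrow> bool) \<Rightarrow> (nat \<Rightarrow> real) \<Rightarrow> real" where
  "out_error x p = (\<integral>y. (\<Sum>j<d. (clamp01 (y j) - p j)\<^sup>2) \<partial>M x)"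

lemma prob_space_M: "x \<in> datasets n d \<Longrightarrow> prob_space (M x)"
  using mechanism unfolding mechanism_def by auto

lemma sets_M: "x \<in> datasets n d \<Longrightarrow> sets (M x) = sets (out_space d)"
  using mechanism unfolding mechanism_def by auto

lemma measurable_M_iff:
  assumes "x \<in> datasets n d"
  shows "f \<in> borel_measurable (M x) \<longleftrightarrow> f \<in> borel_measurable (out_space d)"
  using sets_M[OF assms] by (metis measurable_cong_sets)

lemma
  fixes f :: "(nat \<Rightarrow> real) \<Rightarrow> real"
  assumes x: "x \<in> datasets n d" and f: "f \<in> borel_measurable (out_space d)"
    and lower: "\<And>y. a \<le> f y" and upper: "\<And>y. f y \<le> b"
  shows integrable_M_bounded: "integrable (M x) f"
    and integral_M_bounds: "a \<le> integral\<^sup>L (M x) f" "integral\<^sup>L (M x) f \<le> b"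
proof -
  interpret prob_space "M x"
    using prob_space_M[OF x] .
  have "\<bar>f y\<bar> \<le> \<bar>a\<bar> + \<bar>b\<bar>" for y
    using lower[of y] upper[of y] by linarith
  then show int: "integrable (M x) f"
    using f by (intro integrable_const_bound[where B="\<bar>a\<bar> + \<bar>b\<bar>"]) (auto simp: measurable_M_iff[OF x])
  show "a \<le> integral\<^sup>L (M x) f"
    using integral_mono[OF _ int lower] by (simp add: prob_space)
  show "integral\<^sup>L (M x) f \<le> b"
    using integral_mono[OF int _ upper] by (simp add: prob_space)
qed

lemma measurable_clamp01_component[measurable]:
  "j < d \<Longrightarrow> (\<lambda>y. clamp01 (y j)) \<in> borel_measurable (out_space d)"
  using measurable_out_space_component by measurable

lemma out_mean_bounds:
  assumes "x \<in> datasets n d" "j < d"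
  shows "0 \<le> out_mean x j" "out_mean x j \<le> 1"
  unfolding out_mean_def
  using integral_M_bounds[OF assms(1) measurable_clamp01_component[OF assms(2)], of 0 1] clamp01_bounds
  by auto

lemma integrable_clamp01_component:
  "x \<in> datasets n d \<Longrightarrow> j < d \<Longrightarrow> integrable (M x) (\<lambda>y. clamp01 (y j))"
  using clamp01_bounds by (intro integrable_M_bounded[where a=0 and b=1]) auto

lemma integrable_clamp01_component_sq:
  "x \<in> datasets n d \<Longrightarrow> j < d \<Longrightarrow> integrable (M x) (\<lambda>y. (clamp01 (y j))\<^sup>2)"
  using clamp01_bounds by (intro integrable_M_bounded[where a=0 and b=1]) (auto intro: power_le_one)

lemma integrable_clamp01_component_sq_diff:
  assumes "x \<in> datasets n d" "j < d"
  shows "integrable (M x) (\<lambda>y. (clamp01 (y j) - t)\<^sup>2)"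
proof (rule integrable_M_bounded[OF assms(1), where a=0 and b="(1 + \<bar>t\<bar>)\<^sup>2"])
  show "(clamp01 (y j) - t)\<^sup>2 \<le> (1 + \<bar>t\<bar>)\<^sup>2" for y
    using clamp01_bounds[of "y j"] by (subst abs_le_square_iff[symmetric]) auto
qed (use assms(2) in auto)

lemma integral_clamp01_component_sq_diff:
  assumes x: "x \<in> datasets n d" and j: "j < d"
  shows "(\<integral>y. (clamp01 (y j) - t)\<^sup>2 \<partial>M x) = out_moment2 x j - 2 * t * out_mean x j + t\<^sup>2"
proof -
  interpret prob_space "M x"
    using prob_space_M[OF x] .
  have "(\<integral>y. (clamp01 (y j) - t)\<^sup>2 \<partial>M x) = (\<integral>y. (clamp01 (y j))\<^sup>2 - 2 * t * clamp01 (y j) + t\<^sup>2 \<partial>M x)"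
    by (simp add: power2_diff algebra_simps)
  then show ?thesis
    using integrable_clamp01_component[OF x j] integrable_clamp01_component_sq[OF x j]
    by (simp add: out_moment2_def out_mean_def prob_space)
qed

lemma out_error_eq:
  assumes x: "x \<in> datasets n d"
  shows "out_error x p = (\<Sum>j<d. out_moment2 x j - 2 * p j * out_mean x j + (p j)\<^sup>2)"
proof -
  have "out_error x p = (\<Sum>j<d. \<integral>y. (clamp01 (y j) - p j)\<^sup>2 \<partial>M x)"
    unfolding out_error_def using x by (intro Bochner_Integration.integral_sum integrable_clamp01_component_sq_diff) auto
  then show ?thesis
    using x by (simp add: integral_clamp01_component_sq_diff)
qed

lemma out_mean_sq_le_out_moment2:
  assumes x: "x \<in> datasets n d" and j: "j < d"
  shows "(out_mean x j)\<^sup>2 \<le> out_moment2 x j"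
proof -
  have "0 \<le> (\<integral>y. (clamp01 (y j) - out_mean x j)\<^sup>2 \<partial>M x)"
    by simp
  also have "\<dots> = out_moment2 x j - (out_mean x j)\<^sup>2"
    by (simp only: integral_clamp01_component_sq_diff[OF x j]) (simp add: power2_eq_square)
  finally show ?thesis
    by simp
qed

lemma out_error_bounds:
  assumes x: "x \<in> datasets n d" and p: "p \<in> unit_cube d"
  shows "0 \<le> out_error x p" "out_error x p \<le> real d"
proof -
  have "(\<Sum>j<d. (clamp01 (y j) - p j)\<^sup>2) \<le> (\<Sum>j<d. 1)" for y
    using abs_clamp01_diff_le_1[OF unit_cubeD[OF p]] by (intro sum_mono) (simp add: abs_square_le_1)
  then show "0 \<le> out_error x p" "out_error x p \<le> real d"
    unfolding out_error_def by (intro integral_M_bounds[OF x], simp, auto intro: sum_nonneg)+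
qed

definition row_corr :: "(nat \<Rightarrow> real) \<Rightarrow> (nat \<Rightarrow> bool) \<Rightarrow> (nat \<Rightarrow> real) \<Rightarrow> real" where
  "row_corr p r y = (\<Sum>j<d. (clamp01 (y j) - p j) * (of_bool (r j) - p j))"

definition row_dev :: "(nat \<Rightarrow> real) \<Rightarrow> (nat \<Rightarrow> bool) \<Rightarrow> real" where
  "row_dev p r = (\<Sum>j<d. \<bar>of_bool (r j) - p j\<bar>)"

lemma measurable_row_corr: "row_corr p r \<in> borel_measurable (out_space d)"
  unfolding row_corr_def using measurable_out_space_component by measurable

lemma abs_row_corr_le:
  assumes "p \<in> unit_cube d"
  shows "\<bar>row_corr p r y\<bar> \<le> row_dev p r"
proof -
  have "\<bar>row_corr p r y\<bar> \<le> (\<Sum>j<d. \<bar>clamp01 (y j) - p j\<bar> * \<bar>of_bool (r j) - p j\<bar>)"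
    unfolding row_corr_def abs_mult[symmetric] by (rule sum_abs)
  also have "\<dots> \<le> row_dev p r"
    unfolding row_dev_def using abs_clamp01_diff_le_1[OF unit_cubeD[OF assms]]
    by (intro sum_mono mult_left_le_one_le) auto
  finally show ?thesis .
qed

lemma integral_row_corr:
  assumes x: "x \<in> datasets n d"
  shows "integral\<^sup>L (M x) (row_corr p r) = (\<Sum>j<d. (out_mean x j - p j) * (of_bool (r j) - p j))"
proof -
  interpret prob_space "M x"
    using prob_space_M[OF x] .
  have "integral\<^sup>L (M x) (row_corr p r) = (\<Sum>j<d. \<integral>y. (clamp01 (y j) - p j) * (of_bool (r j) - p j) \<partial>M x)"
    unfolding row_corr_def using x
    by (intro Bochner_Integration.integral_sum) (auto intro!: integrable_clamp01_component)
  then show ?thesis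
    using x by (simp add: out_mean_def prob_space integrable_clamp01_component)
qed

lemma sum_row_prob_integral_row_corr:
  assumes "x \<in> datasets n d"
  shows "(\<Sum>r\<in>bit_rows d. row_prob d p r * integral\<^sup>L (M x) (row_corr p r)) = 0"
proof -
  have "(\<Sum>r\<in>bit_rows d. row_prob d p r * integral\<^sup>L (M x) (row_corr p r))
      = (\<Sum>j<d. (out_mean x j - p j) * (\<Sum>r\<in>bit_rows d. row_prob d p r * (of_bool (r j) - p j)))"
    by (simp add: integral_row_corr[OF assms] sum_distrib_left sum.swap[of _ "bit_rows d"] algebra_simps)
  then show ?thesis
    by (simp add: sum_row_prob_centered)
qed

text \<open>AM-GM with weight \<open>c\<close>, then the variance bound \<open>p (1 - p) \<le> 1/4\<close> for each coordinate
  of the fresh row.\<close>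
lemma sum_row_prob_abs_row_corr_le:
  assumes p: "p \<in> unit_cube d" and c: "0 < c"
  shows "(\<Sum>r\<in>bit_rows d. row_prob d p r * \<bar>row_corr p r y\<bar>)
       \<le> (\<Sum>j<d. (clamp01 (y j) - p j)\<^sup>2) / (8 * c) + c / 2"
proof -
  have "(\<Sum>r\<in>bit_rows d. row_prob d p r * \<bar>row_corr p r y\<bar>)
      \<le> (\<Sum>r\<in>bit_rows d. row_prob d p r * ((row_corr p r y)\<^sup>2 / (2 * c) + c / 2))"
    using row_prob_nonneg[OF p] abs_le_sq_div_add[OF c] by (intro sum_mono mult_left_mono) auto
  also have "\<dots> = (\<Sum>r\<in>bit_rows d. row_prob d p r * (row_corr p r y)\<^sup>2) / (2 * c) + c / 2"
    by (simp add: distrib_left sum.distrib sum_divide_distrib[symmetric] sum_distrib_right[symmetric]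
        sum_row_prob)
  also have "(\<Sum>r\<in>bit_rows d. row_prob d p r * (row_corr p r y)\<^sup>2)
      = (\<Sum>j<d. (clamp01 (y j) - p j)\<^sup>2 * (p j * (1 - p j)))"
    unfolding row_corr_def by (rule sum_row_prob_linear_form_sq)
  also have "\<dots> \<le> (\<Sum>j<d. (clamp01 (y j) - p j)\<^sup>2 / 4)"
  proof (rule sum_mono)
    fix j
    show "(clamp01 (y j) - p j)\<^sup>2 * (p j * (1 - p j)) \<le> (clamp01 (y j) - p j)\<^sup>2 / 4"
      using mult_left_mono[OF mult_one_minus_le_quarter[of "p j"] zero_le_power2[of "clamp01 (y j) - p j"]]
      by simp
  qed
  finally show ?thesis
    using c by (simp add: divide_right_mono sum_divide_distrib[symmetric])
qed

lemma sum_row_prob_integral_abs_row_corr_le: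
  assumes x: "x \<in> datasets n d" and p: "p \<in> unit_cube d" and c: "0 < c"
  shows "(\<Sum>r\<in>bit_rows d. row_prob d p r * (\<integral>y. \<bar>row_corr p r y\<bar> \<partial>M x)) \<le> out_error x p / (8 * c) + c / 2"
proof -
  interpret prob_space "M x"
    using prob_space_M[OF x] .
  have int_abs: "integrable (M x) (\<lambda>y. \<bar>row_corr p r y\<bar>)" for r
    using abs_row_corr_le[OF p] measurable_row_corr by (intro integrable_M_bounded[OF x, where a=0]) auto
  have int_sq: "integrable (M x) (\<lambda>y. \<Sum>j<d. (clamp01 (y j) - p j)\<^sup>2)"
    using x by (intro Bochner_Integration.integrable_sum integrable_clamp01_component_sq_diff) auto
  have "(\<Sum>r\<in>bit_rows d. row_prob d p r * (\<integral>y. \<bar>row_corr p r y\<bar> \<partial>M x))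
      = (\<integral>y. (\<Sum>r\<in>bit_rows d. row_prob d p r * \<bar>row_corr p r y\<bar>) \<partial>M x)"
    using int_abs by (simp add: Bochner_Integration.integral_sum)
  also have "\<dots> \<le> (\<integral>y. (\<Sum>j<d. (clamp01 (y j) - p j)\<^sup>2) / (8 * c) + c / 2 \<partial>M x)"
    using int_abs int_sq sum_row_prob_abs_row_corr_le[OF p c] by (intro integral_mono) auto
  also have "\<dots> = out_error x p / (8 * c) + c / 2"
    using int_sq unfolding out_error_def by (simp add: prob_space)
  finally show ?thesis .
qed

lemma sum_row_prob_row_dev_le:
  assumes p: "p \<in> unit_cube d"
  shows "(\<Sum>r\<in>bit_rows d. row_prob d p r * row_dev p r) \<le> real d / 2"
proof -
  have "(\<Sum>r\<in>bit_rows d. row_prob d p r * row_dev p r)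
      = (\<Sum>j<d. \<Sum>r\<in>bit_rows d. row_prob d p r * \<bar>of_bool (r j) - p j\<bar>)"
    unfolding row_dev_def by (simp add: sum_distrib_left sum.swap[of _ "bit_rows d"])
  also have "\<dots> = (\<Sum>j<d. 2 * (p j * (1 - p j)))"
    using p by (simp add: sum_row_prob_abs_centered mult.assoc)
  also have "\<dots> \<le> (\<Sum>j<d. 1/2)"
    using mult_one_minus_le_quarter by (intro sum_mono) (simp add: mult.commute)
  finally show ?thesis
    by simp
qed

definition dp_corr_bound :: "real \<Rightarrow> real \<Rightarrow> (nat \<Rightarrow> real) \<Rightarrow> (nat \<Rightarrow> bool) \<Rightarrow> (nat \<Rightarrow> nat \<Rightarrow> bool) \<Rightarrow> real"
  where "dp_corr_bound \<epsilon> \<delta> p r z = integral\<^sup>L (M z) (row_corr p r)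
    + (exp \<epsilon> - 1) * (\<integral>y. \<bar>row_corr p r y\<bar> \<partial>M z) + 2 * \<delta> * row_dev p r"

lemma integral_row_corr_le_resampled:
  assumes dp: "diff_private n d \<epsilon> \<delta> M" and \<epsilon>: "0 \<le> \<epsilon>" and \<delta>: "0 \<le> \<delta>" and p: "p \<in> unit_cube d"
    and x: "x \<in> datasets n d" and i: "i < n" and r: "r \<in> bit_rows d"
  shows "integral\<^sup>L (M x) (row_corr p (x i)) \<le> dp_corr_bound \<epsilon> \<delta> p (x i) (x(i := r))"
proof -
  have x': "x(i := r) \<in> datasets n d"
    by (rule fun_upd_in_datasets[OF x i r])
  show ?thesis
    using dp x x' neighbors_fun_upd[OF i, of x r] unfolding diff_private_def dp_corr_bound_def
    by (intro integral_le_if_two_sided_measure_le[OF prob_space_M[OF x] prob_space_M[OF x'] sets_M[OF x]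
          sets_M[OF x'] _ _ \<epsilon> \<delta> measurable_row_corr abs_row_corr_le[OF p]]) blast+
qed

lemma sum_row_prob_dp_corr_bound_le:
  assumes x: "x \<in> datasets n d" and \<epsilon>: "0 \<le> \<epsilon>" and \<delta>: "0 \<le> \<delta>" and p: "p \<in> unit_cube d" and c: "0 < c"
  shows "(\<Sum>r\<in>bit_rows d. row_prob d p r * dp_corr_bound \<epsilon> \<delta> p r x)
       \<le> (exp \<epsilon> - 1) * (out_error x p / (8 * c) + c / 2) + \<delta> * real d"
proof -
  let ?\<rho> = "row_prob d p"
  have "(\<Sum>r\<in>bit_rows d. ?\<rho> r * dp_corr_bound \<epsilon> \<delta> p r x)
      = (\<Sum>r\<in>bit_rows d. ?\<rho> r * integral\<^sup>L (M x) (row_corr p r))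
        + (exp \<epsilon> - 1) * (\<Sum>r\<in>bit_rows d. ?\<rho> r * (\<integral>y. \<bar>row_corr p r y\<bar> \<partial>M x))
        + 2 * \<delta> * (\<Sum>r\<in>bit_rows d. ?\<rho> r * row_dev p r)"
    unfolding sum_distrib_left sum.distrib[symmetric]
    by (intro sum.cong refl) (simp add: dp_corr_bound_def algebra_simps)
  also have "\<dots> \<le> 0 + (exp \<epsilon> - 1) * (out_error x p / (8 * c) + c / 2) + 2 * \<delta> * (real d / 2)"
    using sum_row_prob_integral_row_corr[OF x] sum_row_prob_integral_abs_row_corr_le[OF x p c]
      sum_row_prob_row_dev_le[OF p] exp_ge_add_one_self[of \<epsilon>] \<epsilon> \<delta>
    by (intro add_mono mult_left_mono) auto
  finally show ?thesis
    by simp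
qed

lemma sum_data_prob_integral_row_corr_le:
  assumes dp: "diff_private n d \<epsilon> \<delta> M" and \<epsilon>: "0 \<le> \<epsilon>" and \<delta>: "0 \<le> \<delta>" and i: "i < n"
    and p: "p \<in> unit_cube d" and c: "0 < c"
  shows "(\<Sum>x\<in>datasets n d. data_prob n d p x * integral\<^sup>L (M x) (row_corr p (x i)))
       \<le> (exp \<epsilon> - 1) * ((\<Sum>x\<in>datasets n d. data_prob n d p x * out_error x p) / (8 * c) + c / 2)
         + \<delta> * real d"
proof -
  let ?D = "datasets n d" and ?w = "data_prob n d p" and ?\<rho> = "row_prob d p"
  have w: "0 \<le> ?w x" and \<rho>: "0 \<le> ?\<rho> r" for x r
    using data_prob_nonneg[OF p] row_prob_nonneg[OF p] .
  have "(\<Sum>x\<in>?D. ?w x * integral\<^sup>L (M x) (row_corr p (x i)))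
      = (\<Sum>x\<in>?D. \<Sum>r\<in>bit_rows d. ?w x * ?\<rho> r * integral\<^sup>L (M x) (row_corr p (x i)))"
    by (simp add: sum_distrib_right[symmetric] sum_distrib_left[symmetric] sum_row_prob mult.commute
        mult.left_commute)
  also have "\<dots> \<le> (\<Sum>x\<in>?D. \<Sum>r\<in>bit_rows d. ?w x * ?\<rho> r * dp_corr_bound \<epsilon> \<delta> p (x i) (x(i := r)))"
    using integral_row_corr_le_resampled[OF dp \<epsilon> \<delta> p _ i] w \<rho>
    by (intro sum_mono mult_left_mono) auto
  also have "\<dots> = (\<Sum>x\<in>?D. \<Sum>r\<in>bit_rows d. ?w x * ?\<rho> r * dp_corr_bound \<epsilon> \<delta> p r x)"
    by (rule sum_data_prob_resample_row[OF i])
  also have "\<dots> = (\<Sum>x\<in>?D. ?w x * (\<Sum>r\<in>bit_rows d. ?\<rho> r * dp_corr_bound \<epsilon> \<delta> p r x))"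
    by (simp add: sum_distrib_left mult.assoc)
  also have "\<dots> \<le> (\<Sum>x\<in>?D. ?w x * ((exp \<epsilon> - 1) * (out_error x p / (8 * c) + c / 2) + \<delta> * real d))"
    using sum_row_prob_dp_corr_bound_le[OF _ \<epsilon> \<delta> p c] w by (intro sum_mono mult_left_mono) auto
  also have "\<dots> = (exp \<epsilon> - 1) * ((\<Sum>x\<in>?D. ?w x * out_error x p) / (8 * c))
      + ((exp \<epsilon> - 1) * (c / 2) + \<delta> * real d) * (\<Sum>x\<in>?D. ?w x)"
    by (simp add: sum_distrib_left sum_distrib_right sum_divide_distrib sum.distrib algebra_simps)
  also have "\<dots> = (exp \<epsilon> - 1) * ((\<Sum>x\<in>?D. ?w x * out_error x p) / (8 * c) + c / 2) + \<delta> * real d"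
    by (simp add: sum_data_prob algebra_simps)
  finally show ?thesis .
qed

lemma abs_out_mean_diff_le:
  assumes x: "x \<in> datasets n d" and j: "j < d" and \<alpha>: "0 < \<alpha>"
  shows "\<bar>out_mean x j - t\<bar> \<le> (out_moment2 x j - 2 * t * out_mean x j + t\<^sup>2) / (2 * \<alpha>) + \<alpha> / 2"
proof -
  have "(out_mean x j - t)\<^sup>2 \<le> out_moment2 x j - 2 * t * out_mean x j + t\<^sup>2"
    using out_mean_sq_le_out_moment2[OF x j] by (simp add: power2_diff algebra_simps)
  then have "(out_mean x j - t)\<^sup>2 / (2 * \<alpha>) \<le> (out_moment2 x j - 2 * t * out_mean x j + t\<^sup>2) / (2 * \<alpha>)"
    using \<alpha> by (simp add: divide_right_mono)
  then show ?thesis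
    using abs_le_sq_div_add[OF \<alpha>, of "out_mean x j - t"] by linarith
qed

definition mean_error :: "(nat \<Rightarrow> real) \<Rightarrow> real" where
  "mean_error p = (\<Sum>x\<in>datasets n d. data_prob n d p x * out_error x p)"

definition corr_score :: "(nat \<Rightarrow> real) \<Rightarrow> real" where
  "corr_score p = (\<Sum>j<d. \<Sum>x\<in>datasets n d.
     data_prob n d p x * (out_mean x j * (real (col_count n x j) - real n * p j)))"

definition drift_score :: "(nat \<Rightarrow> real) \<Rightarrow> real" where
  "drift_score p = (\<Sum>j<d. \<Sum>x\<in>datasets n d. data_prob n d p x * (out_mean x j * (2 * p j - 1)))"

lemma corr_score_eq_sum_row_corr:
  "corr_score p = (\<Sum>i<n. \<Sum>x\<in>datasets n d. data_prob n d p x * integral\<^sup>L (M x) (row_corr p (x i)))"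
proof -
  let ?D = "datasets n d" and ?w = "data_prob n d p"
  let ?c = "\<lambda>x j. real (col_count n x j) - real n * p j"
  have centered: "(\<Sum>i<n. of_bool (x i j) - p j) = ?c x j" for x j
    by (simp add: of_nat_col_count sum_subtractf)
  have "(\<Sum>i<n. \<Sum>x\<in>?D. ?w x * integral\<^sup>L (M x) (row_corr p (x i)))
      = (\<Sum>x\<in>?D. ?w x * (\<Sum>j<d. (out_mean x j - p j) * (\<Sum>i<n. of_bool (x i j) - p j)))"
    by (subst sum.swap) (simp add: integral_row_corr sum_distrib_left sum.swap[of _ "{..<n}"])
  also have "\<dots> = (\<Sum>j<d. \<Sum>x\<in>?D. ?w x * (out_mean x j * ?c x j) - p j * (?w x * ?c x j))"
    unfolding centered by (subst sum.swap) (simp add: sum_distrib_left algebra_simps)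
  also have "\<dots> = corr_score p - (\<Sum>j<d. p j * (\<Sum>x\<in>?D. ?w x * ?c x j))"
    by (simp add: corr_score_def sum_subtractf sum_distrib_left)
  also have "(\<Sum>x\<in>?D. ?w x * ?c x j) = 0" if "j < d" for j
  proof -
    have "(\<Sum>x\<in>?D. ?w x * ?c x j) = (\<Sum>i<n. \<Sum>x\<in>?D. ?w x * (of_bool (x i j) - p j))"
      by (simp add: centered[symmetric] sum_distrib_left sum.swap[of _ "{..<n}"])
    also have "\<dots> = 0"
      using that by (simp add: sum_data_prob_row[where g="\<lambda>r. of_bool (r j) - p j"] sum_row_prob_centered)
    finally show ?thesis .
  qed
  then have "(\<Sum>j<d. p j * (\<Sum>x\<in>?D. ?w x * ?c x j)) = 0"
    by simp
  finally show ?thesis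
    by simp
qed

lemma corr_score_le:
  assumes dp: "diff_private n d \<epsilon> \<delta> M" and \<epsilon>: "0 \<le> \<epsilon>" and \<delta>: "0 \<le> \<delta>"
    and p: "p \<in> unit_cube d" and c: "0 < c"
  shows "corr_score p \<le> real n * ((exp \<epsilon> - 1) * (mean_error p / (8 * c) + c / 2) + \<delta> * real d)"
proof -
  have "corr_score p \<le> (\<Sum>i<n. (exp \<epsilon> - 1) * (mean_error p / (8 * c) + c / 2) + \<delta> * real d)"
    unfolding corr_score_eq_sum_row_corr mean_error_def
    by (intro sum_mono sum_data_prob_integral_row_corr_le[OF dp \<epsilon> \<delta> _ p c]) simp
  then show ?thesis
    by simp
qed

lemma drift_score_ge:
  assumes p: "p \<in> unit_cube d" and \<alpha>: "0 < \<alpha>"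
  shows "(\<Sum>j<d. p j * (2 * p j - 1)) - mean_error p / (2 * \<alpha>) - \<alpha> * real d / 2 \<le> drift_score p"
proof -
  let ?D = "datasets n d" and ?w = "data_prob n d p"
  let ?e = "\<lambda>x j. (out_moment2 x j - 2 * p j * out_mean x j + (p j)\<^sup>2) / (2 * \<alpha>) + \<alpha> / 2"
  have "- (?w x * ?e x j) \<le> ?w x * ((out_mean x j - p j) * (2 * p j - 1))" if "x \<in> ?D" "j < d" for x j
  proof -
    have "\<bar>(out_mean x j - p j) * (2 * p j - 1)\<bar> \<le> \<bar>out_mean x j - p j\<bar>"
      using unit_cubeD[OF p \<open>j < d\<close>] by (simp add: abs_mult mult_left_le abs_le_iff)
    also have "\<dots> \<le> ?e x j"
      by (rule abs_out_mean_diff_le[OF that \<alpha>])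
    finally have "- ((out_mean x j - p j) * (2 * p j - 1)) \<le> ?e x j"
      by (simp add: abs_le_iff)
    from mult_left_mono[OF this data_prob_nonneg[OF p, of n x]] show ?thesis
      by simp
  qed
  then have "- (\<Sum>j<d. \<Sum>x\<in>?D. ?w x * ?e x j) \<le> (\<Sum>j<d. \<Sum>x\<in>?D. ?w x * ((out_mean x j - p j) * (2 * p j - 1)))"
    unfolding sum_negf[symmetric] by (intro sum_mono) auto
  also have "\<dots> = (\<Sum>j<d. (\<Sum>x\<in>?D. ?w x * (out_mean x j * (2 * p j - 1)))
      - p j * (2 * p j - 1) * (\<Sum>x\<in>?D. ?w x))"
    by (intro sum.cong refl) (simp add: sum_distrib_left algebra_simps flip: sum_subtractf)
  also have "\<dots> = drift_score p - (\<Sum>j<d. p j * (2 * p j - 1))"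
    by (simp add: drift_score_def sum_data_prob sum_subtractf)
  also have "(\<Sum>j<d. \<Sum>x\<in>?D. ?w x * ?e x j)
      = (\<Sum>x\<in>?D. ?w x * out_error x p / (2 * \<alpha>) + ?w x * (\<alpha> * real d / 2))"
    by (subst sum.swap, intro sum.cong refl)
      (simp add: out_error_eq sum_distrib_left sum.distrib sum_divide_distrib algebra_simps)
  also have "\<dots> = mean_error p / (2 * \<alpha>) + \<alpha> * real d / 2"
    unfolding sum.distrib sum_divide_distrib[symmetric] sum_distrib_right[symmetric] sum_data_prob mean_error_def
    by simp
  finally show ?thesis
    by simp
qed

lemma integrable_mean_error: "integrable (prior d) mean_error"
  unfolding mean_error_def
proof (intro Bochner_Integration.integrable_sum integrable_prior_data_prob_mult)
  fix x assume x: "x \<in> datasets n d"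
  have "out_error x = (\<lambda>p. \<Sum>j<d. out_moment2 x j - 2 * p j * out_mean x j + (p j)\<^sup>2)"
    using out_error_eq[OF x] by (simp add: fun_eq_iff)
  then show "out_error x \<in> borel_measurable (prior d)"
    using measurable_prior_component by simp measurable
  show "\<bar>out_error x p\<bar> \<le> real d" if "p \<in> unit_cube d" for p
    using out_error_bounds[OF x that] by simp
qed

lemma integrable_corr_score: "integrable (prior d) corr_score"
  unfolding corr_score_def
proof (intro Bochner_Integration.integrable_sum integrable_prior_data_prob_mult)
  fix j x assume j: "j \<in> {..<d}" and x: "x \<in> datasets n d"
  have "(\<lambda>p. p j) \<in> borel_measurable (prior d)"
    using j by (simp add: measurable_prior_component)
  then show "(\<lambda>p. out_mean x j * (real (col_count n x j) - real n * p j)) \<in> borel_measurable (prior d)"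
    by measurable
  show "\<bar>out_mean x j * (real (col_count n x j) - real n * p j)\<bar> \<le> real n" if "p \<in> unit_cube d" for p
  proof -
    have "0 \<le> real n * p j" "real n * p j \<le> real n"
      using unit_cubeD[OF that, of j] j by (simp_all add: mult_left_le)
    moreover have "real (col_count n x j) \<le> real n"
      using col_count_le[of n x j] by simp
    ultimately have "\<bar>real (col_count n x j) - real n * p j\<bar> \<le> real n"
      by (simp add: abs_le_iff)
    moreover have "\<bar>out_mean x j\<bar> * \<bar>real (col_count n x j) - real n * p j\<bar>
        \<le> \<bar>real (col_count n x j) - real n * p j\<bar>"
      using out_mean_bounds[OF x, of j] j by (intro mult_left_le_one_le) auto
    ultimately show ?thesis
      by (simp add: abs_mult)
  qed
qed

lemma integrable_drift_score: "integrable (prior d) drift_score"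
  unfolding drift_score_def
proof (intro Bochner_Integration.integrable_sum integrable_prior_data_prob_mult)
  fix j x assume j: "j \<in> {..<d}" and x: "x \<in> datasets n d"
  have "(\<lambda>p. p j) \<in> borel_measurable (prior d)"
    using j by (simp add: measurable_prior_component)
  then show "(\<lambda>p. out_mean x j * (2 * p j - 1)) \<in> borel_measurable (prior d)"
    by measurable
  show "\<bar>out_mean x j * (2 * p j - 1)\<bar> \<le> 1" if "p \<in> unit_cube d" for p
    using out_mean_bounds[OF x, of j] unit_cubeD[OF that, of j] j
    by (auto simp: abs_mult abs_le_iff intro: mult_le_one)
qed

lemma integral_corr_score_eq_integral_drift_score:
  "integral\<^sup>L (prior d) corr_score = integral\<^sup>L (prior d) drift_score"
proof -
  let ?f = "\<lambda>x j p. data_prob n d p x * (real (col_count n x j) + 1 - (real n + 2) * p j)"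
  have f: "integrable (prior d) (?f x j)" if "j < d" for x j
  proof (rule integrable_prior_data_prob_mult[where K="2 * real n + 3"])
    show "(\<lambda>p. real (col_count n x j) + 1 - (real n + 2) * p j) \<in> borel_measurable (prior d)"
      using measurable_prior_component that by measurable
    show "\<bar>real (col_count n x j) + 1 - (real n + 2) * p j\<bar> \<le> 2 * real n + 3" if "p \<in> unit_cube d" for p
    proof -
      have "0 \<le> (real n + 2) * p j" "(real n + 2) * p j \<le> real n + 2"
        using unit_cubeD[OF that \<open>j < d\<close>] by (simp_all add: mult_left_le)
      moreover have "real (col_count n x j) \<le> real n"
        using col_count_le[of n x j] by simp
      ultimately show ?thesis
        unfolding abs_le_iff by linarith
    qed
  qed
  have "corr_score p - drift_score p = (\<Sum>j<d. \<Sum>x\<in>datasets n d. out_mean x j * ?f x j p)" for p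
    unfolding corr_score_def drift_score_def by (simp add: sum_subtractf[symmetric] algebra_simps)
  then have "integral\<^sup>L (prior d) corr_score - integral\<^sup>L (prior d) drift_score
      = (\<Sum>j<d. \<Sum>x\<in>datasets n d. out_mean x j * integral\<^sup>L (prior d) (?f x j))"
    using integrable_corr_score integrable_drift_score f
    by (simp add: Bochner_Integration.integrable_sum Bochner_Integration.integral_sum
        flip: Bochner_Integration.integral_diff)
  also have "\<dots> = 0"
    by (simp add: fingerprint_identity)
  finally show ?thesis
    by simp
qed

lemma ennreal_mean_error_le:
  assumes p: "p \<in> unit_cube d"
  shows "ennreal (mean_error p)
       \<le> (\<Sum>x\<in>datasets n d. ennreal (data_prob n d p x) * (\<integral>\<^sup>+ y. ennreal (\<Sum>j<d. (y j - p j)\<^sup>2) \<partial>M x))"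
proof -
  have "ennreal (mean_error p) = (\<Sum>x\<in>datasets n d. ennreal (data_prob n d p x) * ennreal (out_error x p))"
    unfolding mean_error_def using data_prob_nonneg[OF p] out_error_bounds(1)[OF _ p]
    by (simp add: sum_ennreal[symmetric] ennreal_mult sum_nonneg)
  also have "\<dots> \<le> (\<Sum>x\<in>datasets n d. ennreal (data_prob n d p x) *
      (\<integral>\<^sup>+ y. ennreal (\<Sum>j<d. (y j - p j)\<^sup>2) \<partial>M x))"
  proof (intro sum_mono mult_left_mono)
    fix x assume x: "x \<in> datasets n d"
    have "ennreal (out_error x p) = (\<integral>\<^sup>+ y. ennreal (\<Sum>j<d. (clamp01 (y j) - p j)\<^sup>2) \<partial>M x)"
      unfolding out_error_def using x
      by (intro nn_integral_eq_integral[symmetric] Bochner_Integration.integrable_sum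
          integrable_clamp01_component_sq_diff) (auto intro!: AE_I2 sum_nonneg)
    also have "\<dots> \<le> (\<integral>\<^sup>+ y. ennreal (\<Sum>j<d. (y j - p j)\<^sup>2) \<partial>M x)"
      using abs_clamp01_diff_le[OF unit_cubeD[OF p]]
      by (intro nn_integral_mono ennreal_leI sum_mono) (simp add: abs_le_square_iff)
    finally show "ennreal (out_error x p) \<le> (\<integral>\<^sup>+ y. ennreal (\<Sum>j<d. (y j - p j)\<^sup>2) \<partial>M x)" .
  qed simp
  finally show ?thesis .
qed

lemma integral_mean_error_le:
  assumes acc: "expected_sq_error n d M \<le> ennreal B" and B: "0 \<le> B"
  shows "integral\<^sup>L (prior d) mean_error \<le> B"
proof -
  have "AE p in prior d. ennreal (mean_error p) \<le> (\<Sum>x\<in>datasets n d. ennreal (data_prob n d p x) *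
      (\<integral>\<^sup>+ y. ennreal (\<Sum>j<d. (y j - p j)\<^sup>2) \<partial>M x))"
    using AE_prior_unit_cube[of d] by eventually_elim (rule ennreal_mean_error_le)
  then have "(\<integral>\<^sup>+ p. ennreal (mean_error p) \<partial>prior d) \<le> expected_sq_error n d M"
    unfolding expected_sq_error_def by (rule nn_integral_mono_AE)
  moreover have "AE p in prior d. 0 \<le> mean_error p"
    using AE_prior_unit_cube
    by eventually_elim (auto simp: mean_error_def intro!: sum_nonneg mult_nonneg_nonneg data_prob_nonneg
        out_error_bounds)
  ultimately have "ennreal (integral\<^sup>L (prior d) mean_error) \<le> ennreal B"
    using acc integrable_mean_error by (simp add: nn_integral_eq_integral[symmetric])
  then show ?thesis
    using B by simp
qed

lemma integral_mean_error_fingerprinting_bound: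
  assumes dp: "diff_private n d \<epsilon> \<delta> M" and \<epsilon>: "0 \<le> \<epsilon>" and \<delta>: "0 \<le> \<delta>"
    and \<alpha>: "0 < \<alpha>" and c: "0 < c"
  shows "real d / 6 - integral\<^sup>L (prior d) mean_error / (2 * \<alpha>) - \<alpha> * real d / 2
       \<le> real n * ((exp \<epsilon> - 1) * (integral\<^sup>L (prior d) mean_error / (8 * c) + c / 2) + \<delta> * real d)"
proof -
  interpret prior: prob_space "prior d"
    by (rule prob_space_prior)
  have baseline: "integrable (prior d) (\<lambda>p. p j * (2 * p j - 1))" if "j < d" for j
  proof (rule integrable_prior_bounded[where K=1])
    show "(\<lambda>p. p j * (2 * p j - 1)) \<in> borel_measurable (prior d)"
      using measurable_prior_component that by measurable
    show "\<bar>p j * (2 * p j - 1)\<bar> \<le> 1" if "p \<in> unit_cube d" for p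
      using unit_cubeD[OF that \<open>j < d\<close>] by (auto simp: abs_mult abs_le_iff intro: mult_le_one)
  qed
  have int_baseline: "integrable (prior d) (\<lambda>p. \<Sum>j<d. p j * (2 * p j - 1))"
    using baseline by (intro Bochner_Integration.integrable_sum) auto
  have "(\<integral>p. (\<Sum>j<d. p j * (2 * p j - 1)) \<partial>prior d) = real d / 6"
    using baseline by (simp add: Bochner_Integration.integral_sum integral_prior_drift)
  then have "real d / 6 - integral\<^sup>L (prior d) mean_error / (2 * \<alpha>) - \<alpha> * real d / 2
      = (\<integral>p. (\<Sum>j<d. p j * (2 * p j - 1)) - mean_error p / (2 * \<alpha>) - \<alpha> * real d / 2 \<partial>prior d)"
    using int_baseline integrable_mean_error by (simp add: prior.prob_space)
  also have "\<dots> \<le> integral\<^sup>L (prior d) drift_score"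
  proof (rule integral_mono_AE)
    show "AE p in prior d. (\<Sum>j<d. p j * (2 * p j - 1)) - mean_error p / (2 * \<alpha>) - \<alpha> * real d / 2
        \<le> drift_score p"
      using AE_prior_unit_cube[of d] by eventually_elim (rule drift_score_ge[OF _ \<alpha>])
  qed (use int_baseline integrable_mean_error integrable_drift_score in auto)
  also have "\<dots> = integral\<^sup>L (prior d) corr_score"
    by (rule integral_corr_score_eq_integral_drift_score[symmetric])
  also have "\<dots> \<le> (\<integral>p. real n * ((exp \<epsilon> - 1) * (mean_error p / (8 * c) + c / 2) + \<delta> * real d) \<partial>prior d)"
  proof (rule integral_mono_AE)
    show "AE p in prior d. corr_score p
        \<le> real n * ((exp \<epsilon> - 1) * (mean_error p / (8 * c) + c / 2) + \<delta> * real d)"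
      using AE_prior_unit_cube[of d] by eventually_elim (rule corr_score_le[OF dp \<epsilon> \<delta> _ c])
  qed (use integrable_corr_score integrable_mean_error in auto)
  also have "\<dots> = real n * ((exp \<epsilon> - 1) * (integral\<^sup>L (prior d) mean_error / (8 * c) + c / 2) + \<delta> * real d)"
    using integrable_mean_error by (simp add: prior.prob_space)
  finally show ?thesis .
qed

end

lemma fingerprinting_arith:
  fixes s \<alpha> E N \<delta> :: real
  assumes s: "0 < s" and \<alpha>: "0 < \<alpha>" "\<alpha> \<le> 1/18" and E: "E \<le> \<alpha>\<^sup>2 * s\<^sup>2" and N: "0 \<le> N" "N * \<delta> \<le> 1/10"
    and main: "s\<^sup>2 / 6 - E / (2 * \<alpha>) - \<alpha> * s\<^sup>2 / 2
      \<le> N * ((exp 1 - 1) * (E / (8 * (\<alpha> * s / 2)) + \<alpha> * s / 4) + \<delta> * s\<^sup>2)"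
  shows "s / 5 \<le> N"
proof -
  have "E / (2 * \<alpha>) \<le> \<alpha> * s\<^sup>2 / 2"
    using E \<alpha> by (simp add: field_simps power2_eq_square)
  moreover have "(exp 1 - 1) * (E / (8 * (\<alpha> * s / 2)) + \<alpha> * s / 4) \<le> 2 * (\<alpha> * s / 2)"
  proof -
    have "E / (8 * (\<alpha> * s / 2)) + \<alpha> * s / 4 \<le> \<alpha> * s / 2"
      using E \<alpha> s by (simp add: field_simps power2_eq_square)
    moreover have "0 \<le> exp 1 - (1::real)" "exp 1 - 1 \<le> (2::real)"
      using exp_le exp_ge_add_one_self[of 1] by auto
    ultimately show ?thesis
      using \<alpha> s by (meson mult_left_mono mult_right_mono order.trans less_imp_le mult_pos_pos half_gt_zero)
  qed
  then have "N * ((exp 1 - 1) * (E / (8 * (\<alpha> * s / 2)) + \<alpha> * s / 4)) \<le> N * (2 * (\<alpha> * s / 2))"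
    using N(1) by (rule mult_left_mono)
  moreover have "N * (2 * (\<alpha> * s / 2)) \<le> N * s / 18"
    using mult_left_mono[OF \<alpha>(2) mult_nonneg_nonneg[OF N(1) less_imp_le[OF s]]] by (simp add: algebra_simps)
  moreover have "\<alpha> * s\<^sup>2 \<le> s\<^sup>2 / 18"
    using mult_right_mono[OF \<alpha>(2) zero_le_power2[of s]] by simp
  moreover have "(N * \<delta>) * s\<^sup>2 \<le> s\<^sup>2 / 10"
    using mult_right_mono[OF N(2) zero_le_power2[of s]] by simp
  moreover have "N * ((exp 1 - 1) * (E / (8 * (\<alpha> * s / 2)) + \<alpha> * s / 4) + \<delta> * s\<^sup>2)
      = N * ((exp 1 - 1) * (E / (8 * (\<alpha> * s / 2)) + \<alpha> * s / 4)) + (N * \<delta>) * s\<^sup>2"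
    by (simp add: algebra_simps)
  ultimately have "s\<^sup>2 / 90 \<le> N * s / 18"
    using main by linarith
  then show ?thesis
    using s by (simp add: power2_eq_square field_simps)
qed

theorem corollaryA1:
  fixes n d :: nat and \<alpha> :: real
    and M :: "(nat \<Rightarrow> nat \<Rightarrow> bool) \<Rightarrow> (nat \<Rightarrow> real) measure"
  assumes "\<alpha> > 0"
    and "mechanism n d M"
    and "diff_private n d 1 (1 / (10 * real n)) M"
    and "expected_sq_error n d M \<le> ennreal (\<alpha>\<^sup>2 * real d)"
    and "\<alpha> \<le> 1/18"
  shows "real n \<ge> sqrt (real d) / 5"
proof (cases "d = 0")
  case False
  interpret mechanism_setting n d M
    by unfold_locales (rule assms(2))
  define s where "s = sqrt (real d)"
  have s: "0 < s" "real d = s\<^sup>2"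
    using False by (simp_all add: s_def)
  have "s / 5 \<le> real n"
  proof (rule fingerprinting_arith[OF s(1) assms(1,5)])
    show "integral\<^sup>L (prior d) mean_error \<le> \<alpha>\<^sup>2 * s\<^sup>2"
      using integral_mean_error_le[OF assms(4)] s by simp
    show "real n * (1 / (10 * real n)) \<le> 1/10"
      by simp
    show "s\<^sup>2 / 6 - integral\<^sup>L (prior d) mean_error / (2 * \<alpha>) - \<alpha> * s\<^sup>2 / 2
        \<le> real n * ((exp 1 - 1) * (integral\<^sup>L (prior d) mean_error / (8 * (\<alpha> * s / 2)) + \<alpha> * s / 4)
          + 1 / (10 * real n) * s\<^sup>2)"
      using integral_mean_error_fingerprinting_bound[OF assms(3) _ _ assms(1), of "\<alpha> * s / 2"] s assms(1)
      by simp
  qed simp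
  then show ?thesis
    by (simp add: s_def)
qed simp

end
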